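(* Let $m,n$ be positive integers, $0\le c\le 1$, and $f(\mathbf{z})=c\,\mathbf{z}\otimes(\mathbf{1}-\mathbf{z})$ for $\mathbf{z}\in\mathbb{R}^{m\times n}$. Fix integers $1\le T\le 3$ and $K^1,\dots,K^T\ge 1$. For an input $\mathbf{y}\in[0,1]^{m\times n}$ define the underexposure iteration as follows: $G_{\mathtt{u}}^{(1)}(\mathbf{y})=\mathbf{y}+f(\mathbf{y})$ and $\mathbf{x}_{\mathtt{u}}^{1,0}(\mathbf{y})=G_{\mathtt{u}}^{(1)}(\mathbf{y})$; for each block $t=1,\dots,T$ and $k=1,\dots,K^t$, $\mathbf{x}_{\mathtt{u}}^{t,k}(\mathbf{y})=G_{\mathtt{u}}^{(t)}(\mathbf{y})+f(\mathbf{x}_{\mathtt{u}}^{t,k-1}(\mathbf{y}))$; and for $t<T$, $G_{\mathtt{u}}^{(t+1)}(\mathbf{y})=\mathbf{x}_{\mathtt{u}}^{t,K^t}(\mathbf{y})$ and $\mathbf{x}_{\mathtt{u}}^{t+1,0}(\mathbf{y})=\mathbf{x}_{\mathtt{u}}^{t,K^t}(\mathbf{y})$. Define the overexposure iteration $\mathbf{x}_{\mathtt{o}}^{t,k}(\mathbf{y})$, $G_{\mathtt{o}}^{(t)}(\mathbf{y})$ identically but with every "$+f$" replaced by "$-f$" (i.e. $G_{\mathtt{o}}^{(1)}(\mathbf{y})=\mathbf{y}-f(\mathbf{y})$ and $\mathbf{x}_{\mathtt{o}}^{t,k}(\mathbf{y})=G_{\mathtt{o}}^{(t)}(\mathbf{y})-f(\mathbf{x}_{\mathtt{o}}^{t,k-1}(\mathbf{y}))$),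 with the same $c$, $T$, $K^t$. Then for every $\mathbf{y}\in[0,1]^{m\times n}$, every $t\in\{1,\dots,T\}$ and every $k\in\{1,\dots,K^t\}$, $$\mathbf{x}_{\mathtt{u}}^{t,k}(\mathbf{1}-\mathbf{y})=\mathbf{1}-\mathbf{x}_{\mathtt{o}}^{t,k}(\mathbf{y}).$$
   Context: $\otimes$ denotes element-wise multiplication and $\mathbf{1}$ the $m\times n$ all-ones matrix. The iteration is the paper's "segmented shrinkage iterative scheme" with $T$ built-in blocks, block $t$ having $K^t$ iterative steps $h^k_{\mathtt{u}}$ (resp. $h^k_{\mathtt{o}}$); the theorem states $h_{\mathtt{u}}^{k}(\mathbf{1}-\mathbf{y})=\mathbf{1}-h_{\mathtt{o}}^{k}(\mathbf{y})$ for each step in each block. *)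

theory Defs
  imports "HOL-Analysis.Analysis"
begin

text \<open>Matrices in R^(m x n) are rendered as real^'n^'m; operations componentwise.\<close>

definition ones :: "real^'n^'m" where
  "ones = (\<chi> i j. 1)"

definition hadamard :: "real^'n^'m \<Rightarrow> real^'n^'m \<Rightarrow> real^'n^'m" where
  "hadamard a b = (\<chi> i j. a $ i $ j * b $ i $ j)"

definition fmap :: "real \<Rightarrow> real^'n^'m \<Rightarrow> real^'n^'m" where
  "fmap c z = c *\<^sub>R hadamard z (ones - z)"

text \<open>Generic segmented iteration with sign s (s = 1: underexposure, s = -1: overexposure).
  inner s c G k: x^{t,k} given block start G = G^{(t)} = x^{t,0}.\<close>

fun inner :: "real \<Rightarrow> real \<Rightarrow> real^'n^'m \<Rightarrow> nat \<Rightarrow> real^'n^'m" where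
  "inner s c G 0 = G"
| "inner s c G (Suc k) = G + s *\<^sub>R fmap c (inner s c G k)"

text \<open>blockG s c K y t = G^{(t)}(y) for t \<ge> 1.\<close>
fun blockG :: "real \<Rightarrow> real \<Rightarrow> (nat \<Rightarrow> nat) \<Rightarrow> real^'n^'m \<Rightarrow> nat \<Rightarrow> real^'n^'m" where
  "blockG s c K y 0 = y"
| "blockG s c K y (Suc 0) = y + s *\<^sub>R fmap c y"
| "blockG s c K y (Suc (Suc t)) = inner s c (blockG s c K y (Suc t)) (K (Suc t))"

definition xiter :: "real \<Rightarrow> real \<Rightarrow> (nat \<Rightarrow> nat) \<Rightarrow> real^'n^'m \<Rightarrow> nat \<Rightarrow> nat \<Rightarrow> real^'n^'m" where
  "xiter s c K y t k = inner s c (blockG s c K y t) k"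

definition x_u where "x_u c K y t k = xiter 1 c K y t k"
definition x_o where "x_o c K y t k = xiter (-1) c K y t k"

end

theory Submission
  imports Defs
begin

text \<open>The map \<open>f z = c z (1 - z)\<close> is invariant under the reflection \<open>z \<mapsto> 1 - z\<close>, so the
  reflection turns each step \<open>x \<mapsto> G + f x\<close> into \<open>x \<mapsto> (1 - G) - f x\<close>.\<close>

lemma fmap_ones_minus: "fmap c (ones - z) = fmap c z"
  unfolding fmap_def hadamard_def ones_def
  by (simp add: vec_eq_iff algebra_simps)

lemma inner_ones_minus: "inner s c (ones - G) k = ones - inner (- s) c G k"
proof (induction k)
  case (Suc k)
  have "inner s c (ones - G) (Suc k) = (ones - G) + s *\<^sub>R fmap c (ones - inner (- s) c G k)"
    using Suc.IH by simp
  also have "\<dots> = (ones - G) + s *\<^sub>R fmap c (inner (- s) c G k)"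
    by (simp only: fmap_ones_minus)
  also have "\<dots> = ones - inner (- s) c G (Suc k)"
    by simp
  finally show ?case .
qed simp

lemma blockG_ones_minus: "blockG s c K (ones - y) t = ones - blockG (- s) c K y t"
proof (induction s c K y t rule: blockG.induct)
  case (2 s c K y)
  show ?case by (simp add: fmap_ones_minus)
next
  case (3 s c K y t)
  then show ?case by (simp add: inner_ones_minus)
qed simp

lemma xiter_ones_minus: "xiter s c K (ones - y) t k = ones - xiter (- s) c K y t k"
  unfolding xiter_def by (simp only: blockG_ones_minus inner_ones_minus)

theorem theorem1:
  fixes c :: real and T :: nat and K :: "nat \<Rightarrow> nat" and y :: "real^'n^'m"
  assumes "0 \<le> c" "c \<le> 1"
    and "1 \<le> T" "T \<le> 3"
    and "\<forall>t\<in>{1..T}. 1 \<le> K t"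
    and "\<forall>i j. 0 \<le> y $ i $ j \<and> y $ i $ j \<le> 1"
    and "t \<in> {1..T}" and "k \<in> {1..K t}"
  shows "x_u c K (ones - y) t k = ones - x_o c K y t k"
  unfolding x_u_def x_o_def by (simp add: xiter_ones_minus)

end
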